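(* In a network satisfying (H1) and (H2), if $X$ is a non-intermediate species, then for no $\ell\ge1$ does $x^{(\ell)}$ contain a monomial of the form $z^m$ with $m\ge2$ and $Z$ a non-intermediate species.
   Context: Species are capital letters, concentrations lower-case letters. Mass-action system: $\dot{\mathbf{x}}=\sum_{y\to y'}k_{yy'}\mathbf{x}^y(y'-y)$, rates $k_{yy'}>0$ (vector $\mathbf{k}$). Total derivative: $\dot\varphi=\sum_i\frac{\partial\varphi}{\partial x_i}\dot x_i$ with $\dot x_i$ replaced by the right-hand side; $\varphi^{(\ell)}$ its $\ell$-th iterate; a monomial appears in $\varphi^{(\ell)}$ if its coefficient (a polynomial in $\mathbf{k}$) is nonzero. (H1) Every connected component has the form $Y+S_0\rightleftarrows U_1\to Y+S_1\rightleftarrows\cdots\rightleftarrows U_L\to Y+S_L$ (reactions $Y+S_{j-1}\to U_j$, $U_j\to Y+S_{j-1}$, $U_j\to Y+S_j$), unique enzyme $Y$; intermediates distinct throughout the network; non-intermediates of a component pairwise distinct but may appear in other components; each complex in a unique component. $\mathscr{S}_U$ = substrates/products of the component of intermediate $U$. (H2) A partition $\mathscr{S}^{(0)}\sqcup\cdots\sqcup\mathscr{S}^{(M)}$ ($M\ge2$, nonempty, $\mathscr{S}^{(0)}$ the intermediates) with: for each intermediate $U$ with enzyme $Y$, some $\alpha\ge1$ has $\mathscr{S}_U\subseteq\mathscr{S}^{(\alpha)}$, $Y\notin\mathscr{S}^{(\alpha)}$. *)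

theory Defs
  imports "HOL-Library.Poly_Mapping"
begin

text \<open>Polynomials are
  integer polynomials (via poly_mapping) in the variables: concentrations
  (Inl s) and symbolic rate constants (Inr (y, y')) for reactions y -> y'.\<close>

type_synonym 's cplx = "'s \<Rightarrow>\<^sub>0 nat"
type_synonym 's var = "'s + ('s cplx \<times> 's cplx)"
type_synonym 's pol = "('s var \<Rightarrow>\<^sub>0 nat) \<Rightarrow>\<^sub>0 int"

definition Var :: "'v \<Rightarrow> (('v \<Rightarrow>\<^sub>0 nat) \<Rightarrow>\<^sub>0 int)" where
  "Var v = Poly_Mapping.single (Poly_Mapping.single v 1) 1"

definition xmon :: "'s cplx \<Rightarrow> 's pol" where
  "xmon y = (\<Prod>s\<in>Poly_Mapping.keys y. Var (Inl s) ^ Poly_Mapping.lookup y s)"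

definition pdiff :: "'v \<Rightarrow> (('v \<Rightarrow>\<^sub>0 nat) \<Rightarrow>\<^sub>0 int) \<Rightarrow> (('v \<Rightarrow>\<^sub>0 nat) \<Rightarrow>\<^sub>0 int)" where
  "pdiff v p = (\<Sum>m\<in>Poly_Mapping.keys p. Poly_Mapping.single (m - Poly_Mapping.single v 1)
                                 (Poly_Mapping.lookup p m * int (Poly_Mapping.lookup m v)))"

definition rhs :: "('s cplx \<times> 's cplx) set \<Rightarrow> 's \<Rightarrow> 's pol" where
  "rhs R i = (\<Sum>(y, y')\<in>R. Var (Inr (y, y')) * xmon y
                 * of_int (int (Poly_Mapping.lookup y' i) - int (Poly_Mapping.lookup y i)))"

definition tder :: "'s set \<Rightarrow> ('s cplx \<times> 's cplx) set \<Rightarrow> 's pol \<Rightarrow> 's pol" where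
  "tder Sp R \<phi> = (\<Sum>i\<in>Sp. pdiff (Inl i) \<phi> * rhs R i)"

text \<open>The concentration monomial x^mu appears in p, i.e. its coefficient
  (a polynomial in the rate constants) is nonzero.\<close>
definition contains_xmon :: "'s pol \<Rightarrow> 's cplx \<Rightarrow> bool" where
  "contains_xmon p \<mu> \<longleftrightarrow> (\<exists>m\<in>Poly_Mapping.keys p. \<forall>s. Poly_Mapping.lookup m (Inl s) = Poly_Mapping.lookup \<mu> s)"

text \<open>A component Y+S_0 <-> U_1 -> Y+S_1 <-> ... <-> U_L -> Y+S_L.
  subs = [S_0,...,S_L], ints = [U_1,...,U_L].\<close>
record 's comp =
  enz :: 's
  subs :: "'s list"
  ints :: "'s list"

definition ecx :: "'s comp \<Rightarrow> nat \<Rightarrow> 's cplx" where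
  "ecx c j = Poly_Mapping.single (enz c) 1 + Poly_Mapping.single (subs c ! j) 1"

definition icx :: "'s comp \<Rightarrow> nat \<Rightarrow> 's cplx" where
  "icx c j = Poly_Mapping.single (ints c ! (j - 1)) 1"

definition comp_reactions :: "'s comp \<Rightarrow> ('s cplx \<times> 's cplx) set" where
  "comp_reactions c = (\<Union>j\<in>{1..length (ints c)}.
     {(ecx c (j - 1), icx c j), (icx c j, ecx c (j - 1)), (icx c j, ecx c j)})"

definition comp_complexes :: "'s comp \<Rightarrow> 's cplx set" where
  "comp_complexes c = ecx c ` {0..length (ints c)} \<union> icx c ` {1..length (ints c)}"

definition wf_comp :: "'s comp \<Rightarrow> bool" where
  "wf_comp c \<longleftrightarrow> length (ints c) \<ge> 1 \<and> length (subs c) = length (ints c) + 1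
                 \<and> distinct (enz c # subs c)"

definition species :: "'s comp list \<Rightarrow> 's set" where
  "species cs = (\<Union>c\<in>set cs. insert (enz c) (set (subs c) \<union> set (ints c)))"

definition intermediates :: "'s comp list \<Rightarrow> 's set" where
  "intermediates cs = (\<Union>c\<in>set cs. set (ints c))"

definition reactions :: "'s comp list \<Rightarrow> ('s cplx \<times> 's cplx) set" where
  "reactions cs = (\<Union>c\<in>set cs. comp_reactions c)"

definition H1 :: "'s comp list \<Rightarrow> bool" where
  "H1 cs \<longleftrightarrow> (\<forall>c\<in>set cs. wf_comp c)
     \<and> distinct (concat (map ints cs))
     \<and> (\<forall>c\<in>set cs. \<forall>c'\<in>set cs. set (ints c) \<inter> insert (enz c') (set (subs c')) = {})
     \<and> (\<forall>i<length cs. \<forall>j<length cs. i \<noteq> j \<longrightarrow>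
           comp_complexes (cs ! i) \<inter> comp_complexes (cs ! j) = {})"

definition H2 :: "'s comp list \<Rightarrow> (nat \<Rightarrow> 's set) \<Rightarrow> nat \<Rightarrow> bool" where
  "H2 cs P M \<longleftrightarrow> M \<ge> 2
     \<and> (\<forall>\<alpha>\<le>M. P \<alpha> \<noteq> {})
     \<and> (\<forall>\<alpha>\<le>M. \<forall>\<beta>\<le>M. \<alpha> \<noteq> \<beta> \<longrightarrow> P \<alpha> \<inter> P \<beta> = {})
     \<and> (\<Union>\<alpha>\<in>{0..M}. P \<alpha>) = species cs
     \<and> P 0 = intermediates cs
     \<and> (\<forall>c\<in>set cs. \<forall>U\<in>set (ints c). \<exists>\<alpha>\<in>{1..M}. set (subs c) \<subseteq> P \<alpha> \<and> enz c \<notin> P \<alpha>)"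

end

theory Submission
  imports Defs
begin

text \<open>Every monomial of a total derivative is produced by some term of the right-hand side,
  hence is divisible by the reactant monomial x^y of some reaction y \<rightarrow> y'. Under (H1) a reactant
  is either Y + S with Y \<noteq> S, or a single intermediate U; neither divides a pure power z^m of a
  non-intermediate species Z.\<close>

definition xmon_dvd :: "'s cplx \<Rightarrow> ('s var \<Rightarrow>\<^sub>0 nat) \<Rightarrow> bool" where
  "xmon_dvd y m \<longleftrightarrow> (\<forall>s. Poly_Mapping.lookup y s \<le> Poly_Mapping.lookup m (Inl s))"

lemma xmon_dvd_add_left: "xmon_dvd y b \<Longrightarrow> xmon_dvd y (a + b)"
  unfolding xmon_dvd_def by (simp add: lookup_add trans_le_add2)

lemma xmon_dvd_add_right: "xmon_dvd y a \<Longrightarrow> xmon_dvd y (a + b)"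
  unfolding xmon_dvd_def by (simp add: lookup_add trans_le_add1)

lemma xmon_dvd_keys_subset:
  assumes "xmon_dvd y m" and "\<forall>s. Poly_Mapping.lookup m (Inl s) = Poly_Mapping.lookup \<mu> s"
  shows "Poly_Mapping.keys y \<subseteq> Poly_Mapping.keys \<mu>"
proof
  fix s assume "s \<in> Poly_Mapping.keys y"
  then show "s \<in> Poly_Mapping.keys \<mu>"
    using assms unfolding xmon_dvd_def in_keys_iff by (metis le_zero_eq)
qed

lemma Var_power: "Var v ^ k = Poly_Mapping.single (Poly_Mapping.single v k) 1"
  by (induction k) (simp_all add: Var_def mult_single single_add[symmetric])

lemma prod_single_one:
  "(\<Prod>s\<in>A. Poly_Mapping.single (f s) (1::'b::comm_semiring_1)) = Poly_Mapping.single (\<Sum>s\<in>A. f s) 1"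
  by (induction A rule: infinite_finite_induct) (simp_all add: mult_single)

lemma xmon_eq_single:
  "xmon y = Poly_Mapping.single
     (\<Sum>s\<in>Poly_Mapping.keys y. Poly_Mapping.single (Inl s) (Poly_Mapping.lookup y s)) 1"
  unfolding xmon_def by (simp add: Var_power prod_single_one)

lemma xmon_dvd_keys_xmon: "m \<in> Poly_Mapping.keys (xmon y) \<Longrightarrow> xmon_dvd y m"
  unfolding xmon_eq_single xmon_dvd_def
  by (auto simp: lookup_sum lookup_single when_def in_keys_iff)

lemma xmon_dvd_keys_mult_left:
  assumes "\<And>a. a \<in> Poly_Mapping.keys q \<Longrightarrow> xmon_dvd y a"
    and "m \<in> Poly_Mapping.keys (p * q)"
  shows "xmon_dvd y m"
  using keys_mult[of p q] assms xmon_dvd_add_left by blast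

lemma xmon_dvd_keys_mult_right:
  assumes "\<And>a. a \<in> Poly_Mapping.keys p \<Longrightarrow> xmon_dvd y a"
    and "m \<in> Poly_Mapping.keys (p * q)"
  shows "xmon_dvd y m"
  using keys_mult[of p q] assms xmon_dvd_add_right by blast

lemma keys_rhs_reactant_dvd:
  assumes "m \<in> Poly_Mapping.keys (rhs R i)"
  shows "\<exists>(y, y')\<in>R. xmon_dvd y m"
proof -
  have "Poly_Mapping.keys (rhs R i) \<subseteq> (\<Union>r\<in>R. Poly_Mapping.keys ((\<lambda>(y, y'). Var (Inr (y, y')) * xmon y
           * of_int (int (Poly_Mapping.lookup y' i) - int (Poly_Mapping.lookup y i))) r))"
    unfolding rhs_def by (rule keys_sum)
  with assms obtain y y' where r: "(y, y') \<in> R" and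
    m: "m \<in> Poly_Mapping.keys (Var (Inr (y, y')) * xmon y
           * of_int (int (Poly_Mapping.lookup y' i) - int (Poly_Mapping.lookup y i)))"
    by auto
  have "xmon_dvd y a" if "a \<in> Poly_Mapping.keys (Var (Inr (y, y')) * xmon y)" for a
    using xmon_dvd_keys_mult_left[OF xmon_dvd_keys_xmon that] .
  from this m have "xmon_dvd y m"
    by (rule xmon_dvd_keys_mult_right)
  with r show ?thesis by auto
qed

lemma keys_tder_reactant_dvd:
  assumes "m \<in> Poly_Mapping.keys (tder Sp R \<phi>)"
  shows "\<exists>(y, y')\<in>R. xmon_dvd y m"
proof -
  have "Poly_Mapping.keys (tder Sp R \<phi>) \<subseteq> (\<Union>i\<in>Sp. Poly_Mapping.keys (pdiff (Inl i) \<phi> * rhs R i))"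
    unfolding tder_def by (rule keys_sum)
  with assms obtain i where "m \<in> Poly_Mapping.keys (pdiff (Inl i) \<phi> * rhs R i)" by auto
  then obtain a b where a: "a \<in> Poly_Mapping.keys (rhs R i)" and m: "m = b + a"
    using keys_mult by blast
  obtain y y' where r: "(y, y') \<in> R" and dvd: "xmon_dvd y a"
    using keys_rhs_reactant_dvd[OF a] by auto
  have "xmon_dvd y m"
    unfolding m using dvd by (rule xmon_dvd_add_left)
  with r show ?thesis by auto
qed

lemma reactant_not_pure_power:
  assumes "H1 cs" and "(y, y') \<in> reactions cs" and "Z \<notin> intermediates cs"
  shows "\<not> Poly_Mapping.keys y \<subseteq> {Z}"
proof -
  obtain c j where c: "c \<in> set cs" and j: "j \<in> {1..length (ints c)}"
    and "(y, y') \<in> {(ecx c (j - 1), icx c j), (icx c j, ecx c (j - 1)), (icx c j, ecx c j)}"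
    using assms(2) unfolding reactions_def comp_reactions_def by blast
  then consider "y = ecx c (j - 1)" | "y = icx c j" by blast
  then show ?thesis
  proof cases
    case 1
    have "wf_comp c" using assms(1) c unfolding H1_def by auto
    then have "enz c \<noteq> subs c ! (j - 1)"
      using j unfolding wf_comp_def by auto
    moreover have "{enz c, subs c ! (j - 1)} \<subseteq> Poly_Mapping.keys y"
      using 1 by (auto simp: ecx_def in_keys_iff lookup_add lookup_single)
    ultimately show ?thesis by auto
  next
    case 2
    have "ints c ! (j - 1) \<in> intermediates cs"
      using c j unfolding intermediates_def by (auto intro!: bexI[of _ c])
    moreover have "ints c ! (j - 1) \<in> Poly_Mapping.keys y"
      using 2 by (simp add: icx_def)
    ultimately show ?thesis using assms(3) by auto
  qed
qed

theorem mainTheorem9: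
  fixes cs :: "'s comp list" and P :: "nat \<Rightarrow> 's set" and M :: nat
    and X Z :: 's and l m :: nat
  assumes "H1 cs" and "H2 cs P M"
    and "X \<in> species cs - intermediates cs"
    and "Z \<in> species cs - intermediates cs"
    and "l \<ge> 1" and "m \<ge> 2"
  shows "\<not> contains_xmon ((tder (species cs) (reactions cs) ^^ l) (Var (Inl X)))
            (Poly_Mapping.single Z m)"
proof
  let ?D = "tder (species cs) (reactions cs)"
  obtain k where "l = Suc k" using \<open>l \<ge> 1\<close> by (cases l) auto
  moreover assume "contains_xmon ((?D ^^ l) (Var (Inl X))) (Poly_Mapping.single Z m)"
  ultimately obtain m0 where m0: "m0 \<in> Poly_Mapping.keys (?D ((?D ^^ k) (Var (Inl X))))"
    and pure: "\<forall>s. Poly_Mapping.lookup m0 (Inl s) = Poly_Mapping.lookup (Poly_Mapping.single Z m) s"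
    unfolding contains_xmon_def by auto
  obtain y y' where r: "(y, y') \<in> reactions cs" and dvd: "xmon_dvd y m0"
    using keys_tder_reactant_dvd[OF m0] by auto
  have "Poly_Mapping.keys y \<subseteq> {Z}"
    using xmon_dvd_keys_subset[OF dvd pure] by (auto split: if_splits)
  with reactant_not_pure_power[OF \<open>H1 cs\<close> r] assms(4) show False by blast
qed

end
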